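(* Let $F$ be a non-archimedean local field with residue field $\mathbb F_q$. For $x\in F$ with $0<\|x\|\le1$ and $\|1-x\|=1$, $$E(x)=\frac{1+4q^{-1/2}+q^{-1}}{1-q^{-1}}\log q-\log\|x\|.$$ For all other $x\neq0,1$ the value $E(x)$ is determined from this by the identities $E(x)=E(1-x)$ and $E(x^{-1})=\|x\|^{1/2}E(x)$.
   Context: $\|x\|=q^{-v(x)}$ is the normalized absolute value, and $\|dx\|$ the Haar measure on $F$ normalized so that $\int_{1\le\|x\|<R}\|dx\|/\|x\|=\log R$ for $R\ge1$ in $\|F^\times\|$. For $x\in F\setminus\{0,1\}$, $E(x)=\int_F\frac{\|ds\|}{\sqrt{\|s(s-1)(s-x)\|}}$. *)

theory Defs
  imports "HOL-Analysis.Analysis" "HOL-Probability.Probability"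
begin

text \<open>A non-archimedean local field is modelled as a field type 'a together with a
normalized discrete valuation v (v is only meaningful on nonzero elements),
complete for the induced absolute value, whose residue field O/m has q elements.\<close>

definition discrete_valuation :: "('a::field \<Rightarrow> int) \<Rightarrow> bool" where
  "discrete_valuation v \<longleftrightarrow>
     (\<forall>x y. x \<noteq> 0 \<longrightarrow> y \<noteq> 0 \<longrightarrow> v (x * y) = v x + v y) \<and>
     (\<forall>x y. x \<noteq> 0 \<longrightarrow> y \<noteq> 0 \<longrightarrow> x + y \<noteq> 0 \<longrightarrow> v (x + y) \<ge> min (v x) (v y)) \<and>
     (\<forall>k. \<exists>x. x \<noteq> 0 \<and> v x = k)"

definition absv :: "('a::field \<Rightarrow> int) \<Rightarrow> nat \<Rightarrow> 'a \<Rightarrow> real" where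
  "absv v q x = (if x = 0 then 0 else real q powr (- real_of_int (v x)))"

definition val_ring :: "('a::field \<Rightarrow> int) \<Rightarrow> 'a set" where
  "val_ring v = {x. x = 0 \<or> v x \<ge> 0}"

definition max_ideal :: "('a::field \<Rightarrow> int) \<Rightarrow> 'a set" where
  "max_ideal v = {x. x = 0 \<or> v x \<ge> 1}"

definition residue_classes :: "('a::field \<Rightarrow> int) \<Rightarrow> 'a set set" where
  "residue_classes v = (\<lambda>x. {y \<in> val_ring v. y - x \<in> max_ideal v}) ` val_ring v"

definition complete_wrt :: "('a::field \<Rightarrow> int) \<Rightarrow> nat \<Rightarrow> bool" where
  "complete_wrt v q \<longleftrightarrow>
     (\<forall>X :: nat \<Rightarrow> 'a.
        (\<forall>e>0. \<exists>N. \<forall>m\<ge>N. \<forall>n\<ge>N. absv v q (X m - X n) < e) \<longrightarrow>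
        (\<exists>L. \<forall>e>0. \<exists>N. \<forall>n\<ge>N. absv v q (X n - L) < e))"

definition nonarch_local_field :: "('a::field \<Rightarrow> int) \<Rightarrow> nat \<Rightarrow> bool" where
  "nonarch_local_field v q \<longleftrightarrow>
     discrete_valuation v \<and> card (residue_classes v) = q \<and> q \<ge> 2 \<and> complete_wrt v q"

text \<open>Closed balls \<open>a + m^k\<close>; they generate the Borel sigma-algebra.\<close>
definition vball :: "('a::field \<Rightarrow> int) \<Rightarrow> 'a \<Rightarrow> int \<Rightarrow> 'a set" where
  "vball v a k = {y. y = a \<or> (y \<noteq> a \<and> v (y - a) \<ge> k)}"

text \<open>Haar measure on F, normalized so that the integral of \<open>\<parallel>dx\<parallel>/\<parallel>x\<parallel>\<close> over
\<open>1 \<le> \<parallel>x\<parallel> < R\<close> equals \<open>log R\<close> for every \<open>R \<ge> 1\<close> in \<open>\<parallel>F^\<times>\<parallel>\<close>, i.e. \<open>R = q^n\<close>.\<close>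
definition normalized_haar :: "('a::field \<Rightarrow> int) \<Rightarrow> nat \<Rightarrow> 'a measure \<Rightarrow> bool" where
  "normalized_haar v q M \<longleftrightarrow>
     space M = UNIV \<and>
     sets M = sigma_sets UNIV {vball v a k | a k. True} \<and>
     (\<forall>A\<in>sets M. \<forall>a. emeasure M ((\<lambda>y. a + y) ` A) = emeasure M A) \<and>
     (\<forall>n::nat. (\<integral>\<^sup>+ x \<in> {x. 1 \<le> absv v q x \<and> absv v q x < real q ^ n}.
                   ennreal (1 / absv v q x) \<partial>M) = ennreal (ln (real q ^ n)))"

definition Efun :: "('a::field \<Rightarrow> int) \<Rightarrow> nat \<Rightarrow> 'a measure \<Rightarrow> 'a \<Rightarrow> ennreal" where
  "Efun v q M x = (\<integral>\<^sup>+ s. ennreal (1 / sqrt (absv v q (s * (s - 1) * (s - x)))) \<partial>M)"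

end

theory Submission
  imports Defs
begin

text \<open>
  Write \<open>a = v s\<close>, \<open>b = v (s - 1)\<close>, \<open>c = v (s - x)\<close> and \<open>n = v x\<close>, so that the
  integrand is \<open>q^((a + b + c)/2)\<close>. The ultrametric inequality in the triangles \<open>0, 1, s\<close>,
  \<open>0, x, s\<close> and \<open>1, x, s\<close> cuts \<open>F\<close> into cells on which \<open>a + b + c\<close> depends on a single
  valuation: shells around \<open>0\<close> outside the valuation ring, around \<open>1\<close> and \<open>x\<close> inside their
  residue discs, around \<open>0\<close> below and above level \<open>n\<close>, and two cells on which the integrand
  is constant. Splitting balls into \<open>q\<close> balls of the next level and using the normalisation,
  the shell of level \<open>k\<close> has measure \<open>q^-k ln q\<close>; hence four cells give geometric series
  \<open>ln q * r / (1 - r)\<close> with \<open>r = q^(-1/2)\<close>, the shells between give \<open>(n - 1) ln q\<close>, and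
  the constant cells are balls minus smaller balls. The two identities follow from the
  substitutions \<open>s \<mapsto> 1 - s\<close> and \<open>s \<mapsto> s / x\<close>, as \<open>s \<mapsto> a + b s\<close> scales Haar measure
  by \<open>|b|\<close>.
\<close>

lemma bij_betw_int_atLeast: "bij_betw (\<lambda>j. k + int j) UNIV {k..}"
  by (rule bij_betw_byWitness[where f' = "\<lambda>i. nat (i - k)"]) auto

lemma bij_betw_int_lessThan: "bij_betw (\<lambda>j. k - 1 - int j) UNIV {..<k}"
  by (rule bij_betw_byWitness[where f' = "\<lambda>i. nat (k - 1 - i)"]) auto

section \<open>Discrete valuations and ultrametric balls\<close>

locale discrete_valuation_field =
  fixes v :: "'a::field \<Rightarrow> int"
  assumes discrete_valuation: "discrete_valuation v"
begin

lemma val_mult: "x \<noteq> 0 \<Longrightarrow> y \<noteq> 0 \<Longrightarrow> v (x * y) = v x + v y"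
  using discrete_valuation unfolding discrete_valuation_def by blast

lemma val_add: "x \<noteq> 0 \<Longrightarrow> y \<noteq> 0 \<Longrightarrow> x + y \<noteq> 0 \<Longrightarrow> min (v x) (v y) \<le> v (x + y)"
  using discrete_valuation unfolding discrete_valuation_def by blast

lemma val_surj: "\<exists>x. x \<noteq> 0 \<and> v x = k"
  using discrete_valuation unfolding discrete_valuation_def by blast

lemma val_one [simp]: "v 1 = 0"
  using val_mult[of 1 1] by simp

lemma val_minus [simp]: "v (- x) = v x"
proof (cases "x = 0")
  case False
  have "v (-1) = 0"
    using val_mult[of "-1" "-1"] by simp
  with False show ?thesis
    using val_mult[of "-1" x] by simp
qed simp

lemma val_inverse: "x \<noteq> 0 \<Longrightarrow> v (inverse x) = - v x"
  using val_mult[of x "inverse x"] by simp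

lemma val_diff_commute: "v (x - y) = v (y - x)"
  by (metis minus_diff_eq val_minus)

lemma val_isosceles:
  assumes "x \<noteq> 0" "y \<noteq> 0" "x + y \<noteq> 0"
  shows "min (v x) (v y) \<le> v (x + y)" "min (v (x + y)) (v y) \<le> v x"
    "min (v (x + y)) (v x) \<le> v y"
proof -
  show "min (v x) (v y) \<le> v (x + y)"
    using val_add[OF assms] .
  show "min (v (x + y)) (v y) \<le> v x"
    using val_add[of "x + y" "- y"] assms by simp
  show "min (v (x + y)) (v x) \<le> v y"
    using val_add[of "x + y" "- x"] assms by (simp add: add.commute)
qed

lemma absv_nonzero: "x \<noteq> 0 \<Longrightarrow> absv v q x = real q powr - v x"
  by (simp add: absv_def)

lemma absv_minus [simp]: "absv v q (- x) = absv v q x"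
  by (simp add: absv_def)

lemma absv_mult: "absv v q (x * y) = absv v q x * absv v q y"
  by (cases "x = 0 \<or> y = 0") (auto simp: absv_def val_mult powr_add[symmetric])

lemma absv_inverse: "absv v q (inverse x) = inverse (absv v q x)"
  by (cases "x = 0") (auto simp: absv_def val_inverse powr_minus)

lemma mem_vball: "y \<in> vball v a k \<longleftrightarrow> y = a \<or> k \<le> v (y - a)"
  by (auto simp: vball_def)

lemma vball_center [simp]: "a \<in> vball v a k"
  by (simp add: mem_vball)

lemma vball_antimono: "k \<le> k' \<Longrightarrow> vball v a k' \<subseteq> vball v a k"
  by (auto simp: mem_vball)

lemma vball_trans: "b \<in> vball v a k \<Longrightarrow> c \<in> vball v b k \<Longrightarrow> c \<in> vball v a k"
proof (cases "c = b \<or> b = a \<or> c = a")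
  case False
  assume "b \<in> vball v a k" "c \<in> vball v b k"
  with False have "k \<le> v (c - b)" "k \<le> v (b - a)"
    by (auto simp: mem_vball)
  moreover have "min (v (c - b)) (v (b - a)) \<le> v (c - a)"
    using val_add[of "c - b" "b - a"] False by simp
  ultimately show ?thesis
    unfolding mem_vball by linarith
qed auto

lemma vball_eq_of_mem:
  assumes "b \<in> vball v a k"
  shows "vball v b k = vball v a k"
proof -
  have "a \<in> vball v b k"
    using assms by (auto simp: mem_vball val_diff_commute)
  then show ?thesis
    using assms vball_trans by blast
qed

lemma vball_subset_of_mem: "b \<in> vball v a k \<Longrightarrow> k \<le> j \<Longrightarrow> vball v b j \<subseteq> vball v a k"
  using vball_eq_of_mem vball_antimono by blast

lemma vball_disjoint: "b \<notin> vball v a k \<Longrightarrow> vball v a k \<inter> vball v b k = {}"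
  using vball_eq_of_mem by (metis disjoint_iff vball_center)

definition shell :: "'a \<Rightarrow> int \<Rightarrow> 'a set" where
  "shell c k = vball v c k - vball v c (k + 1)"

lemma mem_shell: "s \<in> shell c k \<longleftrightarrow> s \<noteq> c \<and> v (s - c) = k"
  by (auto simp: shell_def mem_vball)

lemma vball_subset_shell: "x \<noteq> 0 \<Longrightarrow> vball v x (v x + 1) \<subseteq> shell 0 (v x)"
proof
  fix s
  assume "x \<noteq> 0" "s \<in> vball v x (v x + 1)"
  then consider "s = x" | "s \<noteq> x" "v x + 1 \<le> v (s - x)"
    by (auto simp: mem_vball)
  then show "s \<in> shell 0 (v x)"
  proof cases
    case 2
    with \<open>x \<noteq> 0\<close> val_isosceles[of "s - x" x] have "s \<noteq> 0 \<and> v s = v x"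
      by (cases "s = 0") auto
    then show ?thesis
      by (simp add: mem_shell)
  qed (use \<open>x \<noteq> 0\<close> in \<open>simp add: mem_shell\<close>)
qed

lemma image_affine_vball:
  assumes "b \<noteq> 0"
  shows "(\<lambda>s. a + b * s) ` vball v c k = vball v (a + b * c) (k + v b)"
proof -
  have mem: "a + b * s \<in> vball v (a + b * c) (k + v b) \<longleftrightarrow> s \<in> vball v c k" for s
  proof -
    have "a + b * s - (a + b * c) = b * (s - c)"
      by (simp add: algebra_simps)
    then show ?thesis
      using assms val_mult[of b "s - c"] by (cases "s = c") (auto simp: mem_vball)
  qed
  show ?thesis
  proof (intro set_eqI iffI)
    fix w
    assume "w \<in> vball v (a + b * c) (k + v b)"
    moreover have w: "w = a + b * ((w - a) / b)"
      using assms by simp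
    ultimately have "(w - a) / b \<in> vball v c k"
      using mem by metis
    with w show "w \<in> (\<lambda>s. a + b * s) ` vball v c k"
      by (rule image_eqI)
  qed (use mem in auto)
qed

lemma vimage_affine_vball:
  assumes "b \<noteq> 0"
  shows "(\<lambda>s. a + b * s) -` vball v d k = vball v ((d - a) / b) (k - v b)"
proof -
  have "inj (\<lambda>s. a + b * s)"
    using assms by (auto intro: injI)
  moreover have "vball v d k = (\<lambda>s. a + b * s) ` vball v ((d - a) / b) (k - v b)"
    using assms by (simp add: image_affine_vball)
  ultimately show ?thesis
    by (simp add: inj_vimage_image_eq)
qed

definition radial :: "'a \<Rightarrow> int set \<Rightarrow> (int \<Rightarrow> 'b::zero) \<Rightarrow> 'a \<Rightarrow> 'b" where
  "radial c K h s = (if s \<noteq> c \<and> v (s - c) \<in> K then h (v (s - c)) else 0)"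

lemma radial_eq_suminf:
  fixes h :: "int \<Rightarrow> ennreal"
  assumes f: "bij_betw f UNIV K"
  shows "radial c K h s = (\<Sum>j. h (f j) * indicator (shell c (f j)) s)"
proof (cases "s \<noteq> c \<and> v (s - c) \<in> K")
  case True
  then obtain i where i: "f i = v (s - c)"
    using f by (metis bij_betw_imp_surj_on imageE)
  have "(\<Sum>j. h (f j) * indicator (shell c (f j)) s) =
      (\<Sum>j\<in>{i}. h (f j) * indicator (shell c (f j)) s)"
    using i bij_betw_imp_inj_on[OF f]
    by (intro suminf_finite) (auto simp: mem_shell inj_eq split: split_indicator)
  with True i show ?thesis
    by (simp add: radial_def mem_shell)
next
  case False
  then have "indicator (shell c (f j)) s = (0::ennreal)" for j
    using f by (auto simp: mem_shell bij_betw_def split: split_indicator)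
  with False show ?thesis
    by (auto simp: radial_def)
qed

end

section \<open>Haar measure of balls and shells\<close>

locale local_field_haar = discrete_valuation_field v for v :: "'a::field \<Rightarrow> int" +
  fixes q :: nat and M :: "'a measure"
  assumes card_residue_classes: "card (residue_classes v) = q"
    and q_ge_2: "2 \<le> q"
    and normalized_haar: "normalized_haar v q M"
begin

lemma absv_le_1_iff: "x \<noteq> 0 \<Longrightarrow> absv v q x \<le> 1 \<longleftrightarrow> 0 \<le> v x"
  using q_ge_2 powr_le_cancel_iff[of "real q" "- v x" 0] by (simp add: absv_nonzero)

lemma absv_eq_1_iff: "x \<noteq> 0 \<Longrightarrow> absv v q x = 1 \<longleftrightarrow> v x = 0"
  using q_ge_2 powr_inj[of "real q" "- v x" 0] by (simp add: absv_nonzero)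

lemma ln_absv: "x \<noteq> 0 \<Longrightarrow> ln (absv v q x) = - v x * ln q"
  using q_ge_2 by (simp add: absv_nonzero ln_powr)

lemma space_M [simp]: "space M = UNIV"
  using normalized_haar by (simp add: normalized_haar_def)

lemma sets_M: "sets M = sigma_sets UNIV {vball v a k |a k. True}"
  using normalized_haar by (simp add: normalized_haar_def)

lemma sets_vball [measurable, simp]: "vball v a k \<in> sets M"
  unfolding sets_M by (rule sigma_sets.Basic) blast

lemma sets_shell [measurable, simp]: "shell c k \<in> sets M"
  by (simp add: shell_def sets.Diff)

lemma emeasure_translate: "A \<in> sets M \<Longrightarrow> emeasure M ((\<lambda>y. a + y) ` A) = emeasure M A"
  using normalized_haar by (simp add: normalized_haar_def)

lemma emeasure_vball_center: "emeasure M (vball v a k) = emeasure M (vball v 0 k)"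
  using emeasure_translate[of "vball v 0 k" a] image_affine_vball[of 1 a 0 k] by simp

lemma residue_classes_eq: "residue_classes v = (\<lambda>c. vball v c 1) ` vball v 0 0"
proof -
  have "{y \<in> val_ring v. y - c \<in> max_ideal v} = vball v c 1" if "c \<in> vball v 0 0" for c
    using vball_subset_of_mem[OF that, of 1]
    by (auto simp: val_ring_def max_ideal_def mem_vball)
  then show ?thesis
    unfolding residue_classes_def by (auto simp: val_ring_def mem_vball image_def)
qed

lemma finite_residue_classes: "finite (residue_classes v)"
  using card_residue_classes q_ge_2 card.infinite by fastforce

lemma Union_residue_classes: "\<Union> (residue_classes v) = vball v 0 0"
  unfolding residue_classes_eq using vball_subset_of_mem[of _ 0 0 1] vball_center by fastforce

lemma residue_classes_disjoint:
  "B \<in> residue_classes v \<Longrightarrow> B' \<in> residue_classes v \<Longrightarrow> B \<noteq> B' \<Longrightarrow> B \<inter> B' = {}"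
  unfolding residue_classes_eq using vball_disjoint vball_eq_of_mem by blast

lemma q_ge_3:
  assumes "x \<noteq> 0" "1 - x \<noteq> 0" "v x = 0" "v (1 - x) = 0"
  shows "3 \<le> q"
proof -
  have "1 \<notin> vball v 0 1" "x \<notin> vball v 0 1" "x \<notin> vball v 1 1"
    using assms by (auto simp: mem_vball val_diff_commute[of x 1])
  then have "vball v 0 1 \<noteq> vball v 1 1" "vball v 0 1 \<noteq> vball v x 1" "vball v 1 1 \<noteq> vball v x 1"
    using vball_center by metis+
  then have "card {vball v 0 1, vball v 1 1, vball v x 1} = 3"
    by simp
  moreover have "{vball v 0 1, vball v 1 1, vball v x 1} \<subseteq> residue_classes v"
    unfolding residue_classes_eq using assms by (auto simp: mem_vball)
  ultimately show ?thesis
    using card_mono[OF finite_residue_classes] card_residue_classes by metis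
qed

lemma emeasure_vball_eq_q_mult:
  "emeasure M (vball v 0 k) = of_nat q * emeasure M (vball v 0 (k + 1))"
proof -
  obtain p where p: "p \<noteq> 0" "v p = k"
    using val_surj by blast
  have image_vball: "(\<lambda>s. p * s) ` vball v c j = vball v (p * c) (j + k)" for c j
    using image_affine_vball[OF p(1), of 0 c j] p(2) by simp
  define F where "F B = (\<lambda>s. p * s) ` B" for B
  have F_vball: "\<exists>c. F B = vball v c (k + 1)" if "B \<in> residue_classes v" for B
    using that unfolding residue_classes_eq F_def by (auto simp: image_vball add.commute)
  have "inj (\<lambda>s. p * s)"
    using p(1) by (auto intro: injI)
  then have "disjoint_family_on F (residue_classes v)"
    unfolding disjoint_family_on_def F_def
    by (metis image_Int image_empty residue_classes_disjoint)
  moreover have "F ` residue_classes v \<subseteq> sets M"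
    using F_vball by (metis image_subsetI sets_vball)
  moreover have "vball v 0 k = (\<Union>B\<in>residue_classes v. F B)"
    unfolding F_def image_Union[symmetric] Union_residue_classes by (simp add: image_vball)
  ultimately have "emeasure M (vball v 0 k) = (\<Sum>B\<in>residue_classes v. emeasure M (F B))"
    using finite_residue_classes by (simp add: sum_emeasure)
  also have "\<dots> = (\<Sum>B\<in>residue_classes v. emeasure M (vball v 0 (k + 1)))"
    by (intro sum.cong refl) (metis F_vball emeasure_vball_center)
  also have "\<dots> = of_nat q * emeasure M (vball v 0 (k + 1))"
    by (simp add: card_residue_classes)
  finally show ?thesis .
qed

lemma emeasure_units: "emeasure M (shell 0 0) = ennreal (ln q)"
proof -
  have q: "1 < real q"
    using q_ge_2 by simp
  have "x \<in> shell 0 0 \<longleftrightarrow> 1 \<le> absv v q x \<and> absv v q x < real q ^ 1" for x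
  proof (cases "x = 0")
    case False
    then show ?thesis
      using q powr_le_cancel_iff[OF q, of 0 "- v x"] powr_less_cancel_iff[OF q, of "- v x" 1]
      by (auto simp: mem_shell absv_def)
  qed (simp add: mem_shell absv_def)
  then have units: "{x. 1 \<le> absv v q x \<and> absv v q x < real q ^ 1} = shell 0 0"
    by blast
  have "ennreal (ln q) = (\<integral>\<^sup>+ x \<in> shell 0 0. ennreal (1 / absv v q x) \<partial>M)"
    using normalized_haar unfolding normalized_haar_def units[symmetric] by (metis power_one_right)
  also have "\<dots> = (\<integral>\<^sup>+ x. indicator (shell 0 0) x \<partial>M)"
    using q_ge_2 by (intro nn_integral_cong) (auto simp: mem_shell absv_def split: split_indicator)
  finally show ?thesis
    by simp
qed

lemma emeasure_vball_0_1: "emeasure M (vball v 0 1) = ennreal (ln q / (real q - 1))"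
proof -
  have "vball v 1 1 \<subseteq> shell 0 0"
    using vball_subset_shell[of 1] by simp
  then have "emeasure M (vball v 1 1) \<le> emeasure M (shell 0 0)"
    by (rule emeasure_mono) simp
  then have "emeasure M (vball v 0 1) \<noteq> \<infinity>"
    unfolding emeasure_vball_center[of 1 1] emeasure_units by (auto simp: top_unique)
  then obtain m where m: "emeasure M (vball v 0 1) = ennreal m" "0 \<le> m"
    by (cases "emeasure M (vball v 0 1)" rule: ennreal_cases) auto
  have m_le: "m \<le> m * q"
    using mult_left_mono[OF _ m(2), of 1 "real q"] q_ge_2 by linarith
  have "ennreal (ln q) = emeasure M (vball v 0 0 - vball v 0 1)"
    using emeasure_units by (simp add: shell_def)
  also have "\<dots> = emeasure M (vball v 0 0) - emeasure M (vball v 0 1)"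
    using m by (intro emeasure_Diff) (simp_all add: vball_antimono)
  also have "\<dots> = ennreal (q * m - m)"
    using emeasure_vball_eq_q_mult[of 0] m m_le
    by (simp add: ennreal_of_nat_eq_real_of_nat ennreal_mult'[symmetric] ennreal_minus)
  finally have "ln q = (real q - 1) * m"
    using q_ge_2 m(2) m_le by (subst (asm) ennreal_inj) (auto simp: algebra_simps)
  with m q_ge_2 show ?thesis
    by simp
qed

definition val_ring_volume :: real where
  "val_ring_volume = q * ln q / (real q - 1)"

lemma q_powr_minus_succ:
  "real q powr (- real_of_int (k + 1)) = real q powr (- real_of_int k) / real q"
  using q_ge_2 by (simp add: powr_diff powr_minus_divide)

lemma val_ring_volume_pos: "0 < val_ring_volume"
  using q_ge_2 by (simp add: val_ring_volume_def)

lemma val_ring_volume_powr_succ: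
  "val_ring_volume * q powr (- real_of_int (k + 1)) =
    ln q / (real q - 1) * q powr (- real_of_int k)"
  unfolding q_powr_minus_succ using q_ge_2 by (simp add: val_ring_volume_def field_simps)

lemma val_ring_volume_div_q: "val_ring_volume / q = ln q / (real q - 1)"
  using q_ge_2 by (simp add: val_ring_volume_def)

lemma ln_q_div_q_minus_1_le: "ln q / (real q - 1) \<le> ln q"
proof -
  have "ln q \<le> ln q * (real q - 1)"
    using q_ge_2 mult_left_mono[of 1 "real q - 1" "ln q"] by simp
  then show ?thesis
    using q_ge_2 by (simp add: divide_le_eq)
qed

lemma emeasure_vball:
  "emeasure M (vball v c k) = ennreal (val_ring_volume * q powr (- real_of_int k))"
proof -
  have q: "1 < real q"
    using q_ge_2 by simp
  have "emeasure M (vball v 0 k) = ennreal (val_ring_volume * q powr (- real_of_int k))"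
  proof (induction k rule: int_induct[where k = 1])
    case base
    show ?case
      using emeasure_vball_0_1 q by (simp add: val_ring_volume_def powr_minus_divide)
  next
    case (step1 i)
    have "ennreal q * emeasure M (vball v 0 (i + 1)) =
        ennreal q * ennreal (val_ring_volume * q powr (- real_of_int (i + 1)))"
      using step1.IH emeasure_vball_eq_q_mult[of i] val_ring_volume_pos q
      unfolding q_powr_minus_succ
      by (simp add: ennreal_of_nat_eq_real_of_nat ennreal_mult'[symmetric])
    then show ?case
      using q by (simp add: ennreal_mult_cancel_left)
  next
    case (step2 i)
    then show ?case
      using emeasure_vball_eq_q_mult[of "i - 1"] val_ring_volume_pos q q_powr_minus_succ[of "i - 1"]
      by (simp add: ennreal_of_nat_eq_real_of_nat ennreal_mult'[symmetric])
  qed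
  then show ?thesis
    by (simp add: emeasure_vball_center[of c])
qed

lemma emeasure_shell: "emeasure M (shell c k) = ennreal (ln q * q powr (- real_of_int k))"
proof -
  have "emeasure M (shell c k) = emeasure M (vball v c k) - emeasure M (vball v c (k + 1))"
    unfolding shell_def by (intro emeasure_Diff) (simp_all add: emeasure_vball vball_antimono)
  also have "\<dots> = ennreal (val_ring_volume * q powr (- real_of_int k)
      - ln q / (real q - 1) * q powr (- real_of_int k))"
    unfolding emeasure_vball val_ring_volume_powr_succ using q_ge_2 by (simp add: ennreal_minus)
  also have "\<dots> = ennreal (ln q * q powr (- real_of_int k))"
  proof -
    have "val_ring_volume = ln q + ln q / (real q - 1)"
      using q_ge_2 by (simp add: val_ring_volume_def field_simps)
    then show ?thesis
      unfolding left_diff_distrib[symmetric] by simp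
  qed
  finally show ?thesis .
qed

lemma emeasure_Diff_vball:
  assumes "A \<in> sets M" "vball v c k \<subseteq> A" "emeasure M A = ennreal \<alpha>"
  shows "emeasure M (A - vball v c k) = ennreal (\<alpha> - val_ring_volume * q powr (- real_of_int k))"
  using assms val_ring_volume_pos by (simp add: emeasure_Diff emeasure_vball ennreal_minus)

lemma emeasure_shell_Diff_vball:
  assumes "vball v d (k + 1) \<subseteq> shell c k"
  shows "emeasure M (shell c k - vball v d (k + 1)) =
    ennreal ((ln q - ln q / (real q - 1)) * q powr (- real_of_int k))"
  using emeasure_Diff_vball[OF _ assms emeasure_shell] unfolding val_ring_volume_powr_succ
  by (simp add: algebra_simps)

section \<open>Radial functions and affine substitutions\<close>

lemma sets_singleton [measurable, simp]: "{c} \<in> sets M"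
proof -
  have "{c} = (\<Inter>k. vball v c k)"
  proof (intro set_eqI iffI)
    fix x
    assume "x \<in> (\<Inter>k. vball v c k)"
    then have "x \<in> vball v c (v (x - c) + 1)"
      by blast
    then show "x \<in> {c}"
      by (simp add: mem_vball)
  qed auto
  also have "\<dots> \<in> sets M"
    by (intro sets.countable_INT) auto
  finally show ?thesis .
qed

lemma measurable_val_diff:
  "(\<lambda>s. if s = c then None else Some (v (s - c))) \<in> M \<rightarrow>\<^sub>M count_space UNIV"
proof -
  have "(\<lambda>s. if s = c then None else Some (v (s - c))) -` {k} =
      (case k of None \<Rightarrow> {c} | Some j \<Rightarrow> shell c j)" for k
    by (cases k) (auto simp: mem_shell split: if_splits)
  then show ?thesis
    by (auto simp: measurable_count_space_eq2_countable split: option.split)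
qed

lemma borel_measurable_fun_val_diff [measurable]:
  "(\<lambda>s. if s = c then a else g (v (s - c))) \<in> borel_measurable M"
proof -
  have "(\<lambda>s. if s = c then a else g (v (s - c))) =
      case_option a g \<circ> (\<lambda>s. if s = c then None else Some (v (s - c)))"
    by auto
  also have "\<dots> \<in> borel_measurable M"
    by (rule measurable_comp[OF measurable_val_diff]) simp
  finally show ?thesis .
qed

lemma borel_measurable_absv [measurable]: "(\<lambda>s. absv v q (s - c)) \<in> borel_measurable M"
proof -
  have "(\<lambda>s. absv v q (s - c)) = (\<lambda>s. if s = c then 0 else real q powr - v (s - c))"
    by (auto simp: absv_def)
  then show ?thesis
    by simp
qed

lemma borel_measurable_radial [measurable]: "radial c K h \<in> borel_measurable M"
proof -
  have "radial c K h = (\<lambda>s. if s = c then 0 else (if v (s - c) \<in> K then h (v (s - c)) else 0))"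
    by (auto simp: radial_def)
  then show ?thesis
    by simp
qed

lemma Int_stable_vballs: "Int_stable (insert {} {vball v a k |a k. True})"
proof -
  have nested: "vball v a k \<inter> vball v b j \<in> insert {} {vball v a k |a k. True}"
    if "k \<le> j" for a b k j
  proof (cases "b \<in> vball v a k")
    case True
    then have "vball v a k \<inter> vball v b j = vball v b j"
      using vball_subset_of_mem[OF True that] by blast
    then show ?thesis
      by blast
  next
    case False
    then have "vball v a k \<inter> vball v b j = {}"
      using vball_disjoint[OF False] vball_antimono[OF that, of b] by blast
    then show ?thesis
      by simp
  qed
  have "vball v a k \<inter> vball v b j \<in> insert {} {vball v a k |a k. True}" for a b k j
    using nested[of k j a b] nested[of j k b a] by (cases "k \<le> j") (auto simp: Int_commute)
  then show ?thesis
    unfolding Int_stable_def by blast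
qed

lemma sets_M_insert_empty: "sets M = sigma_sets UNIV (insert {} {vball v a k |a k. True})"
  unfolding sets_M by (rule sigma_sets_eqI) (auto intro: sigma_sets.Basic sigma_sets.Empty)

lemma measurable_affine:
  assumes "b \<noteq> 0"
  shows "(\<lambda>s. a + b * s) \<in> M \<rightarrow>\<^sub>M M"
proof (rule measurable_sigma_sets[OF sets_M])
  fix B
  assume "B \<in> {vball v a k |a k. True}"
  then show "(\<lambda>s. a + b * s) -` B \<inter> space M \<in> sets M"
    using assms by (auto simp: vimage_affine_vball)
qed auto

lemma distr_affine:
  assumes b: "b \<noteq> 0"
  shows "distr M M (\<lambda>s. a + b * s) = density M (\<lambda>_. ennreal (1 / absv v q b))"
proof (rule measure_eqI_generator_eq[OF Int_stable_vballs, where \<Omega> = UNIV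
      and A = "\<lambda>i. vball v 0 (- int i)"])
  have emeasure_distr_vball:
    "emeasure (distr M M (\<lambda>s. a + b * s)) (vball v d k) =
      ennreal (val_ring_volume * q powr (- real_of_int (k - v b)))" for d k
    using b by (simp add: emeasure_distr measurable_affine vimage_affine_vball emeasure_vball)
  have "0 < absv v q b"
    using b q_ge_2 by (simp add: absv_nonzero)
  moreover have
    "real q powr (- real_of_int (k - v b)) = 1 / absv v q b * real q powr (- real_of_int k)" for k
    using b q_ge_2 by (simp add: absv_nonzero powr_diff powr_minus_divide)
  ultimately have "emeasure (distr M M (\<lambda>s. a + b * s)) (vball v d k) =
      ennreal (1 / absv v q b) * emeasure M (vball v d k)" for d k
    using val_ring_volume_pos
    by (simp add: emeasure_distr_vball emeasure_vball ennreal_mult[symmetric] mult.left_commute)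
  then show "emeasure (distr M M (\<lambda>s. a + b * s)) X =
      emeasure (density M (\<lambda>_. ennreal (1 / absv v q b))) X"
    if "X \<in> insert {} {vball v a k |a k. True}" for X
    using that by (auto simp: emeasure_density nn_integral_cmult_indicator)
  show "emeasure (distr M M (\<lambda>s. a + b * s)) (vball v 0 (- int i)) \<noteq> \<infinity>" for i
    by (simp add: emeasure_distr_vball)
  have "s \<in> vball v 0 (- int (nat (- v s)))" for s
    by (simp add: mem_vball)
  then show "(\<Union>i. vball v 0 (- int i)) = UNIV"
    by blast
  show "range (\<lambda>i. vball v 0 (- int i)) \<subseteq> insert {} {vball v a k |a k. True}"
    by blast
qed (simp_all add: sets_M_insert_empty)

lemma nn_integral_affine:
  assumes "b \<noteq> 0" "g \<in> borel_measurable M"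
  shows "(\<integral>\<^sup>+s. g (a + b * s) \<partial>M) = ennreal (1 / absv v q b) * integral\<^sup>N M g"
proof -
  have "(\<integral>\<^sup>+s. g (a + b * s) \<partial>M) = integral\<^sup>N (distr M M (\<lambda>s. a + b * s)) g"
    using assms by (simp add: nn_integral_distr measurable_affine)
  also have "\<dots> = ennreal (1 / absv v q b) * integral\<^sup>N M g"
    using assms by (simp add: distr_affine nn_integral_density nn_integral_cmult)
  finally show ?thesis .
qed

lemma nn_integral_radial:
  fixes h :: "int \<Rightarrow> ennreal"
  assumes "bij_betw f UNIV K"
  shows "integral\<^sup>N M (radial c K h) =
    (\<Sum>j. h (f j) * ennreal (ln q * q powr (- real_of_int (f j))))"
proof -
  have "integral\<^sup>N M (radial c K h) = (\<integral>\<^sup>+s. (\<Sum>j. h (f j) * indicator (shell c (f j)) s) \<partial>M)"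
    by (intro arg_cong[where f = "integral\<^sup>N M"] ext radial_eq_suminf[OF assms])
  also have "\<dots> = (\<Sum>j. h (f j) * emeasure M (shell c (f j)))"
    by (simp add: nn_integral_suminf nn_integral_cmult_indicator)
  finally show ?thesis
    by (simp add: emeasure_shell)
qed

definition q_pow_half :: "int \<Rightarrow> ennreal" where
  "q_pow_half k = ennreal (real q powr (k / 2))"

lemma q_pow_half_0 [simp]: "q_pow_half 0 = 1"
  using q_ge_2 by (simp add: q_pow_half_def)

lemma q_pow_half_mult_powr: "q_pow_half (2 * k) * ennreal (r * q powr (- real_of_int k)) = ennreal r"
proof -
  have "real q powr k * real q powr (- real_of_int k) = 1"
    using q_ge_2 by (simp add: powr_add[symmetric])
  then have cancel: "real q powr k * (r * q powr (- real_of_int k)) = r"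
    by (metis mult.left_commute mult.right_neutral)
  have "q_pow_half (2 * k) * ennreal (r * q powr (- real_of_int k)) =
      ennreal (real q powr k * (r * q powr (- real_of_int k)))"
    by (simp add: q_pow_half_def ennreal_mult')
  then show ?thesis
    unfolding cancel .
qed

definition inv_sqrt_q :: real where
  "inv_sqrt_q = real q powr (-1/2)"

lemma inv_sqrt_q_pos: "0 < inv_sqrt_q"
  using q_ge_2 by (simp add: inv_sqrt_q_def)

lemma inv_sqrt_q_less_1: "inv_sqrt_q < 1"
  using q_ge_2 by (simp add: inv_sqrt_q_def powr_less_one)

lemma inv_sqrt_q_squared: "inv_sqrt_q\<^sup>2 = 1 / q"
  using q_ge_2 by (simp add: inv_sqrt_q_def power2_eq_square powr_add[symmetric] powr_minus_divide)

lemma suminf_shells_geometric: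
  assumes "\<And>j. real_of_int (k j) / 2 - real_of_int (m j) = - (1 + real j) / 2"
  shows "(\<Sum>j. q_pow_half (k j) * ennreal (ln q * q powr (- real_of_int (m j)))) =
    ennreal (ln q * (inv_sqrt_q / (1 - inv_sqrt_q)))"
proof -
  have summand: "q_pow_half (k j) * ennreal (ln q * q powr (- real_of_int (m j))) =
      ennreal (ln q * inv_sqrt_q * inv_sqrt_q ^ j)" for j
  proof -
    have "inv_sqrt_q * inv_sqrt_q ^ j = real q powr (- (1 + real j) / 2)"
      using q_ge_2
      by (simp add: inv_sqrt_q_def powr_realpow[symmetric] powr_powr powr_add[symmetric] field_simps)
    also have "\<dots> = real q powr (real_of_int (k j) / 2) * real q powr (- real_of_int (m j))"
      unfolding assms[symmetric] by (simp add: powr_add[symmetric])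
    finally show ?thesis
      using q_ge_2 by (simp add: q_pow_half_def ennreal_mult'[symmetric] mult.assoc)
  qed
  have "(\<lambda>j. ln q * inv_sqrt_q * inv_sqrt_q ^ j) sums (ln q * inv_sqrt_q * (1 / (1 - inv_sqrt_q)))"
    using inv_sqrt_q_pos inv_sqrt_q_less_1 by (intro sums_mult geometric_sums) simp
  then show ?thesis
    unfolding summand using q_ge_2 inv_sqrt_q_pos by (subst suminf_ennreal_eq) simp_all
qed

lemma nn_integral_radial_geometric:
  defines "G \<equiv> ennreal (ln q * (inv_sqrt_q / (1 - inv_sqrt_q)))"
  shows "integral\<^sup>N M (radial 0 {..<0} (\<lambda>a. q_pow_half (3 * a))) = G"
    and "integral\<^sup>N M (radial 1 {1..} q_pow_half) = G"
    and "integral\<^sup>N M (radial c {n + 1..} (\<lambda>a. q_pow_half (n + a))) = G"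
  unfolding G_def nn_integral_radial[OF bij_betw_int_lessThan]
    nn_integral_radial[OF bij_betw_int_atLeast]
  by (rule suminf_shells_geometric; simp add: field_simps)+

lemma nn_integral_radial_between:
  "integral\<^sup>N M (radial 0 {1..} (\<lambda>a. if a < n then q_pow_half (2 * a) else 0)) =
    ennreal (ln q * nat (n - 1))"
proof -
  have "integral\<^sup>N M (radial 0 {1..} (\<lambda>a. if a < n then q_pow_half (2 * a) else 0)) =
      (\<Sum>j. if j < nat (n - 1) then ennreal (ln q) else 0)"
    unfolding nn_integral_radial[OF bij_betw_int_atLeast]
  proof (intro suminf_cong)
    fix j
    show "(if 1 + int j < n then q_pow_half (2 * (1 + int j)) else 0) *
        ennreal (ln q * q powr (- real_of_int (1 + int j))) =
        (if j < nat (n - 1) then ennreal (ln q) else 0)"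
      using q_pow_half_mult_powr[of "1 + int j" "ln q"] by auto
  qed
  also have "\<dots> = (\<Sum>j<nat (n - 1). ennreal (ln q))"
    by (subst suminf_finite[where N = "{..<nat (n - 1)}"]) auto
  also have "\<dots> = ennreal (ln q * nat (n - 1))"
    using q_ge_2 by (simp add: ennreal_of_nat_eq_real_of_nat ennreal_mult' mult.commute)
  finally show ?thesis .
qed

end

section \<open>The integral \<open>E\<close>\<close>

text \<open>With \<open>a = v s\<close>, \<open>b = v (s - 1)\<close>, \<open>c = v (s - x)\<close> and \<open>n = v x\<close>, the hypotheses are
  the isosceles property of the triangles \<open>0, 1, s\<close>, \<open>0, x, s\<close> and \<open>1, x, s\<close> (where
  \<open>v (1 - x) = 0\<close>), and the cases are the cells used to evaluate \<open>E x\<close>.\<close>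

lemma isosceles_cases:
  fixes a b c n :: int
  assumes "min b 0 \<le> a" "min a 0 \<le> b" "min a b \<le> 0"
    and "min c n \<le> a" "min a n \<le> c" "min a c \<le> n"
    and "min b 0 \<le> c" "min c 0 \<le> b" "min c b \<le> 0"
    and "0 \<le> n"
  obtains (outside) "a < 0" "b = a" "c = a" "a + b + c = 3 * a"
    | (near_one) "1 \<le> b" "a = 0" "c = 0" "a + b + c = b"
    | (between) "1 \<le> a" "a < n" "b = 0" "c = a" "a + b + c = 2 * a"
    | (near_zero) "n + 1 \<le> a" "b = 0" "c = n" "a + b + c = n + a"
    | (near_x) "n + 1 \<le> c" "a = n" "b = 0" "a + b + c = n + c"
    | (level_n) "a = n" "c = n" "b = 0" "a + b + c = 2 * n"
    | (units) "a = 0" "b = 0" "c = 0" "n \<noteq> 0" "a + b + c = 0"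
  using assms by smt

lemma closed_form_algebra:
  fixes q r L n :: real
  assumes q: "1 < q" and r: "r < 1" "r\<^sup>2 = 1 / q"
  shows "4 * (L * (r / (1 - r))) + (L * (n + 1) - 2 * (L / (q - 1)))
    = (1 + 4 * r + 1 / q) / (1 - 1 / q) * L + n * L"
proof -
  have "r * q * r = 1"
    using q r by (simp add: power2_eq_square field_simps)
  then have e1: "r / (1 - r) = (r * q + 1) / (q - 1)"
    using q r by (simp add: frac_eq_eq algebra_simps)
  have e2: "(1 + 4 * r + 1 / q) / (1 - 1 / q) = (q + 4 * r * q + 1) / (q - 1)"
    using q by (simp add: field_simps)
  \<comment> \<open>\<open>field_simps\<close> clears the common denominator \<open>(q - 1)\<^sup>2\<close> only given this fact\<close>
  have "(q - 1) * (q - 1) \<noteq> 0"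
    using q by simp
  then show ?thesis
    unfolding e1 e2 using q by (simp add: field_simps)
qed

context local_field_haar
begin

definition E_integrand :: "'a \<Rightarrow> 'a \<Rightarrow> ennreal" where
  "E_integrand x s = ennreal (1 / sqrt (absv v q (s * (s - 1) * (s - x))))"

lemma Efun_eq_nn_integral: "Efun v q M x = integral\<^sup>N M (E_integrand x)"
  by (simp add: Efun_def E_integrand_def[abs_def])

lemma borel_measurable_E_integrand [measurable]: "E_integrand x \<in> borel_measurable M"
proof -
  have eq: "E_integrand x =
      (\<lambda>s. ennreal (1 / sqrt (absv v q (s - 0) * absv v q (s - 1) * absv v q (s - x))))"
    by (simp add: fun_eq_iff E_integrand_def absv_mult)
  show ?thesis
    unfolding eq by measurable
qed

lemma E_integrand_eq:
  assumes "s \<noteq> 0" "s \<noteq> 1" "s \<noteq> x"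
  shows "E_integrand x s = q_pow_half (v s + v (s - 1) + v (s - x))"
proof -
  define t where "t = real_of_int (v s + v (s - 1) + v (s - x))"
  have absv_eq: "absv v q (s * (s - 1) * (s - x)) = real q powr - t"
    unfolding t_def using assms by (simp add: absv_mult absv_nonzero powr_add[symmetric])
  have "sqrt (real q powr - t) = real q powr (- t / 2)"
    using powr_half_sqrt_powr[of "real q" "- t"] by simp
  also have "\<dots> = 1 / real q powr (t / 2)"
    by (simp add: powr_minus_divide[symmetric])
  finally have "1 / sqrt (real q powr - t) = real q powr (t / 2)"
    by simp
  then show ?thesis
    unfolding E_integrand_def q_pow_half_def absv_eq t_def by simp
qed

text \<open>At the poles \<open>0, 1, x\<close> the integrand is \<open>ennreal (1 / sqrt 0) = 0\<close>, as \<open>1 / 0 = 0\<close>.\<close>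

lemma E_integrand_decompose:
  assumes x: "x \<noteq> 0" "1 - x \<noteq> 0" "v (1 - x) = 0" "v x = n" and n: "0 \<le> n"
  shows "E_integrand x = (\<lambda>s.
      radial 0 {..<0} (\<lambda>a. q_pow_half (3 * a)) s
    + radial 1 {1..} q_pow_half s
    + radial 0 {n + 1..} (\<lambda>a. q_pow_half (n + a)) s
    + radial x {n + 1..} (\<lambda>c. q_pow_half (n + c)) s
    + radial 0 {1..} (\<lambda>a. if a < n then q_pow_half (2 * a) else 0) s
    + q_pow_half (2 * n) * indicator (shell 0 n - vball v x (n + 1) - vball v 1 1) s
    + indicator (shell 0 0 - vball v 1 1 - vball v 0 n) s)"
    (is "_ = ?rhs")
proof (rule ext)
  fix s
  show "E_integrand x s = ?rhs s"
  proof (cases "s = 0 \<or> s = 1 \<or> s = x")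
    case True
    have "E_integrand x s = 0"
      using True by (auto simp: E_integrand_def absv_def)
    moreover have "v (x - 1) = 0"
      using x(3) val_diff_commute by simp
    ultimately show ?thesis
      using True x n by (auto simp: radial_def mem_shell mem_vball val_diff_commute[of 0])
  next
    case False
    define a b c where "a = v s" and "b = v (s - 1)" and "c = v (s - x)"
    have E: "E_integrand x s = q_pow_half (a + b + c)"
      unfolding a_def b_def c_def using False by (intro E_integrand_eq) auto
    have "min b 0 \<le> a" "min a 0 \<le> b" "min a b \<le> 0"
      using val_isosceles[of "s - 1" 1] False unfolding a_def b_def by auto
    moreover have "min c n \<le> a" "min a n \<le> c" "min a c \<le> n"
      using val_isosceles[of "s - x" x] False x unfolding a_def c_def by auto
    moreover have "min b 0 \<le> c" "min c 0 \<le> b" "min c b \<le> 0"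
      using val_isosceles[of "s - 1" "1 - x"] False x unfolding b_def c_def by auto
    ultimately show ?thesis
      using n E False
      by (cases rule: isosceles_cases)
        (use n in \<open>simp_all add: radial_def mem_shell mem_vball a_def[symmetric]
          b_def[symmetric] c_def[symmetric] add.commute\<close>)
  qed
qed

lemma emeasure_units_Diff_residue_discs:
  assumes "x \<noteq> 0" "1 - x \<noteq> 0" "v x = 0" "v (1 - x) = 0"
  shows "emeasure M (shell 0 0 - vball v x 1 - vball v 1 1) =
    ennreal (ln q - 2 * (ln q / (real q - 1)))"
proof -
  have "vball v x 1 \<subseteq> shell 0 0"
    using vball_subset_shell[OF assms(1)] assms(3) by simp
  then have "emeasure M (shell 0 0 - vball v x 1) = ennreal (ln q - ln q / (real q - 1))"
    using emeasure_shell_Diff_vball[of x 0 0] by simp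
  moreover have "1 \<notin> vball v x 1"
    using assms by (simp add: mem_vball val_diff_commute)
  then have "vball v 1 1 \<subseteq> shell 0 0 - vball v x 1"
    using vball_subset_shell[of 1] vball_disjoint[of 1 x 1] by auto
  ultimately show ?thesis
    using emeasure_Diff_vball[of "shell 0 0 - vball v x 1" 1 1] by (simp add: val_ring_volume_div_q)
qed

lemma residual_contribution:
  assumes x: "x \<noteq> 0" "1 - x \<noteq> 0" "v (1 - x) = 0" "v x = n" and n: "0 \<le> n"
  shows "ennreal (ln q * nat (n - 1))
      + q_pow_half (2 * n) * emeasure M (shell 0 n - vball v x (n + 1) - vball v 1 1)
      + emeasure M (shell 0 0 - vball v 1 1 - vball v 0 n)
    = ennreal (ln q * (real_of_int n + 1) - 2 * (ln q / (real q - 1)))"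
proof -
  define d where "d = ln q / (real q - 1)"
  have one_cell: "vball v 1 1 \<subseteq> shell 0 0"
    using vball_subset_shell[of 1] by simp
  have x_cell: "vball v x (n + 1) \<subseteq> shell 0 n"
    using vball_subset_shell[OF x(1)] x(4) by simp
  have shell_minus_x:
    "emeasure M (shell 0 n - vball v x (n + 1)) = ennreal ((ln q - d) * q powr - n)"
    using emeasure_shell_Diff_vball[OF x_cell] by (simp add: d_def)
  show ?thesis
  proof (cases "n = 0")
    case True
    have "emeasure M (shell 0 0 - vball v x 1 - vball v 1 1) = ennreal (ln q - d - d)"
      using emeasure_units_Diff_residue_discs[of x] x True by (simp add: d_def)
    moreover have "shell 0 0 - vball v 1 1 - vball v 0 0 = {}"
      by (auto simp: shell_def)
    then have "emeasure M (shell 0 0 - vball v 1 1 - vball v 0 0) = 0"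
      by (simp only: emeasure_empty)
    ultimately show ?thesis
      using True by (simp add: d_def)
  next
    case False
    have "shell 0 n - vball v x (n + 1) - vball v 1 1 = shell 0 n - vball v x (n + 1)"
      using one_cell False by (auto simp: mem_shell)
    moreover have "shell 0 0 - vball v 1 1 - vball v 0 n = shell 0 0 - vball v 1 1"
      using False n by (auto simp: mem_shell mem_vball)
    moreover have "emeasure M (shell 0 0 - vball v 1 1) = ennreal (ln q - d)"
      using emeasure_shell_Diff_vball[of 1 0 0] one_cell by (simp add: d_def)
    moreover note q_pow_half_mult_powr[of n "ln q - d"]
    moreover have "0 \<le> ln q * (n - 1)" "0 \<le> ln q - d"
      using n False q_ge_2 ln_q_div_q_minus_1_le by (simp_all add: d_def)
    ultimately show ?thesis
      using shell_minus_x n False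
      by (simp add: ennreal_plus[symmetric] d_def algebra_simps del: ennreal_plus)
  qed
qed

lemma residual_contribution_nonneg:
  assumes "x \<noteq> 0" "1 - x \<noteq> 0" "v (1 - x) = 0" "v x = n" and n: "0 \<le> n"
  shows "0 \<le> ln q * (real_of_int n + 1) - 2 * (ln q / (real q - 1))"
proof (cases "n = 0")
  case True
  then have "3 \<le> q"
    using q_ge_3 assms by simp
  with True show ?thesis
    by (simp add: field_simps)
next
  case False
  then have "ln q * 2 \<le> ln q * (real_of_int n + 1)"
    using n q_ge_2 by (intro mult_left_mono) auto
  then show ?thesis
    using ln_q_div_q_minus_1_le by simp
qed

lemma Efun_closed_form:
  assumes x: "x \<noteq> 0" "1 - x \<noteq> 0" "v (1 - x) = 0" "v x = n" and n: "0 \<le> n"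
  shows "Efun v q M x = ennreal ((1 + 4 * inv_sqrt_q + 1 / q) / (1 - 1 / q) * ln q + n * ln q)"
proof -
  define G where "G = ln q * (inv_sqrt_q / (1 - inv_sqrt_q))"
  define R where "R = ln q * (real_of_int n + 1) - 2 * (ln q / (real q - 1))"
  have "Efun v q M x = ennreal G + ennreal G + ennreal G + ennreal G
      + ennreal (ln q * nat (n - 1))
      + q_pow_half (2 * n) * emeasure M (shell 0 n - vball v x (n + 1) - vball v 1 1)
      + emeasure M (shell 0 0 - vball v 1 1 - vball v 0 n)"
    unfolding Efun_eq_nn_integral E_integrand_decompose[OF x n]
    by (simp add: nn_integral_add nn_integral_radial_geometric nn_integral_radial_between
        nn_integral_cmult_indicator G_def)
  also have "\<dots> = ennreal G + ennreal G + ennreal G + ennreal G + ennreal R"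
    unfolding R_def residual_contribution[OF x n, symmetric]
    by (simp only: add.assoc)
  also have "\<dots> = ennreal (4 * G + R)"
  proof -
    have "0 \<le> G"
      using q_ge_2 inv_sqrt_q_pos inv_sqrt_q_less_1 by (simp add: G_def)
    moreover have "0 \<le> R"
      unfolding R_def using residual_contribution_nonneg[OF x n] .
    ultimately show ?thesis
      by (simp add: ennreal_plus[symmetric] del: ennreal_plus)
  qed
  also have "4 * G + R = (1 + 4 * inv_sqrt_q + 1 / q) / (1 - 1 / q) * ln q + n * ln q"
    unfolding G_def R_def
    using closed_form_algebra[OF _ inv_sqrt_q_less_1 inv_sqrt_q_squared] q_ge_2 by simp
  finally show ?thesis .
qed

lemma Efun_one_minus: "Efun v q M (1 - x) = Efun v q M x"
proof -
  have "E_integrand (1 - x) (1 + (-1) * s) = E_integrand x s" for s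
  proof -
    have "(1 + (-1) * s) * (1 + (-1) * s - 1) * (1 + (-1) * s - (1 - x)) =
        - (s * (s - 1) * (s - x))"
      by (simp add: algebra_simps)
    then show ?thesis
      unfolding E_integrand_def by (simp only: absv_minus)
  qed
  then have "Efun v q M x = (\<integral>\<^sup>+s. E_integrand (1 - x) (1 + (-1) * s) \<partial>M)"
    by (simp add: Efun_eq_nn_integral)
  also have "\<dots> = Efun v q M (1 - x)"
    using q_ge_2 by (subst nn_integral_affine) (simp_all add: Efun_eq_nn_integral absv_def)
  finally show ?thesis ..
qed

lemma E_integrand_inverse:
  assumes x: "x \<noteq> 0"
  shows "E_integrand (inverse x) (inverse x * s) = ennreal (absv v q x powr (3/2)) * E_integrand x s"
proof -
  define a where "a = absv v q x"
  define y where "y = absv v q (s * (s - 1) * (s - x))"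
  have a: "0 < a"
    using x q_ge_2 by (simp add: a_def absv_nonzero)
  have eq: "inverse x * s * (inverse x * s - 1) * (inverse x * s - inverse x) =
      inverse x * inverse x * inverse x * (s * (s - 1) * (s - x))"
    using x by (simp add: field_simps)
  have "absv v q (inverse x * s * (inverse x * s - 1) * (inverse x * s - inverse x)) = y / a ^ 3"
    unfolding eq y_def a_def absv_mult absv_inverse by (simp add: field_simps power3_eq_cube)
  moreover have "1 / sqrt (y / a ^ 3) = a powr (3/2) * (1 / sqrt y)"
    using a powr_half_sqrt_powr[of a 3] by (simp add: real_sqrt_divide powr_numeral)
  ultimately show ?thesis
    using a by (simp add: E_integrand_def a_def[symmetric] y_def[symmetric] ennreal_mult'[symmetric])
qed

lemma Efun_inverse:
  assumes x: "x \<noteq> 0"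
  shows "Efun v q M (inverse x) = ennreal (absv v q x powr (1/2)) * Efun v q M x"
proof -
  define a where "a = absv v q x"
  have a: "0 < a"
    using x q_ge_2 by (simp add: a_def absv_nonzero)
  have "1 / absv v q (inverse x) = a"
    by (simp add: a_def absv_inverse divide_inverse)
  then have "ennreal a * Efun v q M (inverse x) = ennreal (a powr (3/2)) * Efun v q M x"
    using x nn_integral_affine[of "inverse x" "E_integrand (inverse x)" 0]
    by (simp add: Efun_eq_nn_integral E_integrand_inverse a_def nn_integral_cmult)
  then have "(ennreal (1 / a) * ennreal a) * Efun v q M (inverse x) =
      (ennreal (1 / a) * ennreal (a powr (3/2))) * Efun v q M x"
    by (simp add: mult.assoc)
  moreover have "ennreal (1 / a) * ennreal a = 1"
    using a by (simp add: ennreal_mult'[symmetric])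
  moreover have "a powr (3/2) = a * a powr (1/2)"
    using a powr_add[of a 1 "1/2"] by simp
  then have "ennreal (1 / a) * ennreal (a powr (3/2)) = ennreal (a powr (1/2))"
    using a by (simp add: ennreal_mult'[symmetric])
  ultimately show ?thesis
    by (simp add: a_def)
qed

end

theorem proposition8p5:
  fixes v :: "'a::field \<Rightarrow> int" and q :: nat and M :: "'a measure"
  assumes "nonarch_local_field v q"
    and "normalized_haar v q M"
  shows "(\<forall>x. 0 < absv v q x \<and> absv v q x \<le> 1 \<and> absv v q (1 - x) = 1 \<longrightarrow>
            Efun v q M x =
              ennreal ((1 + 4 * real q powr (-1/2) + 1 / real q) / (1 - 1 / real q) * ln (real q)
                       - ln (absv v q x)))
       \<and> (\<forall>x. x \<noteq> 0 \<and> x \<noteq> 1 \<longrightarrow>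
            Efun v q M x = Efun v q M (1 - x) \<and>
            Efun v q M (inverse x) = ennreal (absv v q x powr (1/2)) * Efun v q M x)"
proof -
  interpret local_field_haar v q M
    using assms
    by (auto simp: nonarch_local_field_def local_field_haar_def local_field_haar_axioms_def
        discrete_valuation_field_def)
  have closed_form: "Efun v q M x =
      ennreal ((1 + 4 * real q powr (-1/2) + 1 / real q) / (1 - 1 / real q) * ln (real q)
        - ln (absv v q x))"
    if "0 < absv v q x" "absv v q x \<le> 1" "absv v q (1 - x) = 1" for x
  proof -
    have "x \<noteq> 0" "1 - x \<noteq> 0"
      using that by (auto simp: absv_def)
    with that show ?thesis
      using Efun_closed_form[of x "v x"]
      by (simp add: absv_le_1_iff absv_eq_1_iff ln_absv inv_sqrt_q_def)
  qed
  show ?thesis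
    using closed_form Efun_one_minus Efun_inverse by auto
qed

end
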